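(* Let $G$ be a group generated by $x_1,\dots,x_n$, with finite commutator subgroup $C=[G,G]$, such that $G/C$ is free abelian of rank $n$ with basis the images of $x_1,\dots,x_n$, and let $\Lambda\subseteq G$ be a generating set of $G$ closed under inversion. Then every element of $C$ can be written as a finite product of links $l_{\mathbf r,\lambda}$ with $\mathbf r\in\mathbb Z^n$ and $\lambda\in\Lambda$.
   Context: Notation: $\bar g=g^{-1}$. For $\mathbf r\in\mathbb Z^n$ put $g_{\mathbf r}=x_1^{r_1}\cdots x_n^{r_n}$. Every $g\in G$ decomposes uniquely as $g=g_{\mathbf r}c$ with $c\in C$; write $\mathbf r_g=\mathbf r$. The link is $l_{\mathbf r,\lambda}=\overline{g_{\mathbf r+\mathbf r_\lambda}}\,\lambda\,g_{\mathbf r}\in C$. *)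

theory Defs
  imports "HOL-Algebra.Algebra"
begin

text \<open>Integer vectors r in Z^n, represented as functions nat => int supported on {..<n}.\<close>
definition intvecs :: "nat \<Rightarrow> (nat \<Rightarrow> int) set" where
  "intvecs n = {r. \<forall>i. n \<le> i \<longrightarrow> r i = 0}"

text \<open>g_r = x_0^(r_0) * ... * x_(n-1)^(r_(n-1)) (indices shifted to start at 0).\<close>
definition gvec :: "('a, 'b) monoid_scheme \<Rightarrow> nat \<Rightarrow> (nat \<Rightarrow> 'a) \<Rightarrow> (nat \<Rightarrow> int) \<Rightarrow> 'a" where
  "gvec G n x r = foldr (\<lambda>i acc. (x i [^]\<^bsub>G\<^esub> r i) \<otimes>\<^bsub>G\<^esub> acc) [0..<n] \<one>\<^bsub>G\<^esub>"

text \<open>r_g: the unique r in Z^n with g = g_r c, c in C.\<close>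
definition rvec :: "('a, 'b) monoid_scheme \<Rightarrow> nat \<Rightarrow> (nat \<Rightarrow> 'a) \<Rightarrow> 'a set \<Rightarrow> 'a \<Rightarrow> (nat \<Rightarrow> int)" where
  "rvec G n x C g = (THE r. r \<in> intvecs n \<and> inv\<^bsub>G\<^esub> (gvec G n x r) \<otimes>\<^bsub>G\<^esub> g \<in> C)"

definition link :: "('a, 'b) monoid_scheme \<Rightarrow> nat \<Rightarrow> (nat \<Rightarrow> 'a) \<Rightarrow> 'a set \<Rightarrow> (nat \<Rightarrow> int) \<Rightarrow> 'a \<Rightarrow> 'a" where
  "link G n x C r lam =
     inv\<^bsub>G\<^esub> (gvec G n x (\<lambda>i. r i + rvec G n x C lam i)) \<otimes>\<^bsub>G\<^esub> lam \<otimes>\<^bsub>G\<^esub> gvec G n x r"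

end

(*
  Write c \<in> C as a product \<lambda>_1 ... \<lambda>_k of elements of \<Lambda> and put
  s_j = r_{\<lambda>_(j+1)} + ... + r_{\<lambda>_k}. The product of the links l_{s_j, \<lambda>_j}
  telescopes to g_{s_0}^-1 c. As G/C is abelian, C g_{s_0} = C \<lambda>_1 ... \<lambda>_k = C = C g_0,
  and freeness of G/C on the x_i forces s_0 = 0, so c is that product of links.
*)
theory Submission
  imports Defs "HOL-Library.Function_Algebras"
begin

lemma (in monoid) multlist_append:
  assumes "set xs \<subseteq> carrier G" "set ys \<subseteq> carrier G"
  shows "foldr (\<otimes>) (xs @ ys) \<one> = foldr (\<otimes>) xs \<one> \<otimes> foldr (\<otimes>) ys \<one>"
  using assms(1) by (induction xs) (simp_all add: assms(2) m_assoc)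

lemma (in group) generate_imp_multlist:
  assumes "S \<subseteq> carrier G" "\<And>s. s \<in> S \<Longrightarrow> inv s \<in> S" "g \<in> generate G S"
  shows "\<exists>ls. set ls \<subseteq> S \<and> g = foldr (\<otimes>) ls \<one>"
  using assms(3)
proof (induction rule: generate.induct)
  case one
  show ?case by (intro exI[of _ "[]"]) simp
next
  case (incl s)
  then show ?case using assms(1) by (intro exI[of _ "[s]"]) auto
next
  case (inv s)
  then show ?case using assms by (intro exI[of _ "[inv s]"]) auto
next
  case (eng g h)
  then obtain ls ms where "set ls \<subseteq> S" "g = foldr (\<otimes>) ls \<one>" "set ms \<subseteq> S" "h = foldr (\<otimes>) ms \<one>"
    by blast
  then show ?case
    using assms(1) by (intro exI[of _ "ls @ ms"]) (auto simp: multlist_append simp del: foldr_append)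
qed

lemma (in group_hom) hom_multlist:
  "set xs \<subseteq> carrier G \<Longrightarrow> h (foldr (\<otimes>) xs \<one>) = foldr (\<otimes>\<^bsub>H\<^esub>) (map h xs) \<one>\<^bsub>H\<^esub>"
  by (induction xs) simp_all

lemma (in comm_monoid) multlist_map_mult:
  assumes "\<And>i. i \<in> set is \<Longrightarrow> f i \<in> carrier G \<and> g i \<in> carrier G"
  shows "foldr (\<otimes>) (map (\<lambda>i. f i \<otimes> g i) is) \<one>
       = foldr (\<otimes>) (map f is) \<one> \<otimes> foldr (\<otimes>) (map g is) \<one>"
  using assms
proof (induction "is")
  case (Cons i "is")
  have "set (map f is) \<subseteq> carrier G" "set (map g is) \<subseteq> carrier G"
    using Cons.prems by auto
  then show ?case using Cons by (simp add: m_ac)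
qed simp

lemma gvec_conv_multlist:
  "gvec G n x r = foldr (\<otimes>\<^bsub>G\<^esub>) (map (\<lambda>i. x i [^]\<^bsub>G\<^esub> r i) [0..<n]) \<one>\<^bsub>G\<^esub>"
  by (simp add: gvec_def foldr_map o_def)

lemma (in group) gvec_closed:
  "(\<And>i. i < n \<Longrightarrow> x i \<in> carrier G) \<Longrightarrow> gvec G n x r \<in> carrier G"
  unfolding gvec_conv_multlist by (rule multlist_closed) auto

lemma (in group) gvec_zero: "gvec G n x 0 = \<one>"
  by (induction n) (simp_all add: gvec_def)

lemma (in group_hom) hom_gvec:
  assumes "\<And>i. i < n \<Longrightarrow> x i \<in> carrier G"
  shows "h (gvec G n x r) = gvec H n (h \<circ> x) r"
proof -
  have "h (gvec G n x r) = foldr (\<otimes>\<^bsub>H\<^esub>) (map (\<lambda>i. h (x i [^] r i)) [0..<n]) \<one>\<^bsub>H\<^esub>"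
    unfolding gvec_conv_multlist using assms by (subst hom_multlist) (auto simp: o_def)
  also have "\<dots> = gvec H n (h \<circ> x) r"
    unfolding gvec_conv_multlist using assms
    by (intro arg_cong[where f = "\<lambda>xs. foldr _ xs _"]) (simp add: hom_int_pow)
  finally show ?thesis .
qed

lemma (in comm_group) gvec_add:
  assumes "\<And>i. i < n \<Longrightarrow> x i \<in> carrier G"
  shows "gvec G n x (r + s) = gvec G n x r \<otimes> gvec G n x s"
proof -
  have "gvec G n x (r + s) = foldr (\<otimes>) (map (\<lambda>i. x i [^] r i \<otimes> x i [^] s i) [0..<n]) \<one>"
    unfolding gvec_conv_multlist using assms
    by (intro arg_cong[where f = "\<lambda>xs. foldr _ xs _"]) (simp add: int_pow_mult)
  also have "\<dots> = gvec G n x r \<otimes> gvec G n x s"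
    unfolding gvec_conv_multlist using assms by (intro multlist_map_mult) auto
  finally show ?thesis .
qed

lemma sum_list_in_intvecs: "set rs \<subseteq> intvecs n \<Longrightarrow> sum_list rs \<in> intvecs n"
  by (induction rs) (simp_all add: intvecs_def)

primrec link_chain :: "('a, 'b) monoid_scheme \<Rightarrow> nat \<Rightarrow> (nat \<Rightarrow> 'a) \<Rightarrow> 'a set \<Rightarrow> 'a list \<Rightarrow> 'a list"
  where
    "link_chain G n x C [] = []"
  | "link_chain G n x C (l # ls) =
       link G n x C (\<Sum>k\<leftarrow>ls. rvec G n x C k) l # link_chain G n x C ls"

lemma (in group) multlist_link_chain:
  assumes "\<And>i. i < n \<Longrightarrow> x i \<in> carrier G" "set ls \<subseteq> carrier G"
  shows "foldr (\<otimes>) (link_chain G n x C ls) \<one>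
       = inv (gvec G n x (\<Sum>l\<leftarrow>ls. rvec G n x C l)) \<otimes> foldr (\<otimes>) ls \<one>"
  using assms(2)
proof (induction ls)
  case Nil
  \<comment> \<open>The induction eta-expands the vector argument, so the empty sum appears as \<open>\<lambda>i. 0\<close>.\<close>
  show ?case by (simp add: gvec_zero[unfolded zero_fun_def])
next
  case (Cons l ls)
  define r where "r = (\<Sum>k\<leftarrow>ls. rvec G n x C k)"
  have gvec_carrier: "gvec G n x s \<in> carrier G" for s
    using assms(1) by (rule gvec_closed)
  have sum_Cons: "(\<Sum>k\<leftarrow>l # ls. rvec G n x C k) = r + rvec G n x C l"
    by (simp add: r_def add.commute)
  have "foldr (\<otimes>) (link_chain G n x C (l # ls)) \<one>
      = inv (gvec G n x (r + rvec G n x C l)) \<otimes> l \<otimes> gvec G n x r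
        \<otimes> (inv (gvec G n x r) \<otimes> foldr (\<otimes>) ls \<one>)"
    using Cons by (simp add: link_def plus_fun_def r_def)
  also have "\<dots> = inv (gvec G n x (\<Sum>k\<leftarrow>l # ls. rvec G n x C k)) \<otimes> foldr (\<otimes>) (l # ls) \<one>"
    using Cons.prems gvec_carrier by (simp only: sum_Cons) (simp add: m_assoc, simp add: m_assoc[symmetric])
  finally show ?case .
qed

lemma (in normal) rcos_eq_iff_inv_mult_mem:
  assumes "a \<in> carrier G" "b \<in> carrier G"
  shows "H #> a = H #> b \<longleftrightarrow> inv a \<otimes> b \<in> H"
proof -
  have "H #> a = H #> b \<longleftrightarrow> a <# H = b <# H"
    using assms coset_eq by simp
  also have "\<dots> \<longleftrightarrow> b \<in> a <# H"
    using assms by (metis l_repr_independence lcos_self subgroup_axioms)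
  also have "\<dots> \<longleftrightarrow> inv a \<otimes> b \<in> H"
    using assms is_group by (metis lcos_module_imp lcos_module_rev)
  finally show ?thesis .
qed

locale free_abelian_quotient = normal C G for C and G (structure) +
  fixes n :: nat and x :: "nat \<Rightarrow> 'a"
  assumes x_closed: "\<And>i. i < n \<Longrightarrow> x i \<in> carrier G"
    and comm_group_Mod: "comm_group (G Mod C)"
    and free_basis: "bij_betw (\<lambda>r. C #> gvec G n x r) (intvecs n) (rcosets C)"
begin

lemma rcos_gvec_add:
  "C #> gvec G n x (r + s) = (C #> gvec G n x r) <#> (C #> gvec G n x s)"
proof -
  interpret Q: comm_group "G Mod C" by (rule comm_group_Mod)
  interpret q: group_hom G "G Mod C" "(#>) C"
    by (simp add: group_hom_def group_hom_axioms_def is_group Q.is_group r_coset_hom_Mod)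
  have "C #> gvec G n x (r + s) = gvec (G Mod C) n ((#>) C \<circ> x) (r + s)"
    using x_closed by (rule q.hom_gvec)
  also have "\<dots> = gvec (G Mod C) n ((#>) C \<circ> x) r \<otimes>\<^bsub>G Mod C\<^esub> gvec (G Mod C) n ((#>) C \<circ> x) s"
    using x_closed by (intro Q.gvec_add) auto
  also have "\<dots> = (C #> gvec G n x r) <#> (C #> gvec G n x s)"
    using x_closed by (simp add: q.hom_gvec)
  finally show ?thesis .
qed

lemma rcos_gvec_inj:
  "r \<in> intvecs n \<Longrightarrow> s \<in> intvecs n \<Longrightarrow> C #> gvec G n x r = C #> gvec G n x s \<Longrightarrow> r = s"
  using free_basis by (auto simp: bij_betw_def dest: inj_onD)

lemma
  assumes "g \<in> carrier G"
  shows rvec_in_intvecs: "rvec G n x C g \<in> intvecs n"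
    and rcos_gvec_rvec: "C #> gvec G n x (rvec G n x C g) = C #> g"
proof -
  have unique: "\<exists>!r. r \<in> intvecs n \<and> C #> gvec G n x r = C #> g"
  proof -
    have "C #> g \<in> (\<lambda>r. C #> gvec G n x r) ` intvecs n"
      using free_basis rcosetsI[OF subset assms] by (simp add: bij_betw_imp_surj_on)
    then obtain r where "r \<in> intvecs n" "C #> gvec G n x r = C #> g"
      by (auto simp: image_iff)
    then show ?thesis using rcos_gvec_inj by blast
  qed
  have rvec_eq: "rvec G n x C g = (THE r. r \<in> intvecs n \<and> C #> gvec G n x r = C #> g)"
    unfolding rvec_def using assms x_closed by (simp add: rcos_eq_iff_inv_mult_mem gvec_closed)
  from theI'[OF unique]
  show "rvec G n x C g \<in> intvecs n" "C #> gvec G n x (rvec G n x C g) = C #> g"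
    unfolding rvec_eq by simp_all
qed

lemma sum_rvec_in_intvecs:
  "set ls \<subseteq> carrier G \<Longrightarrow> (\<Sum>l\<leftarrow>ls. rvec G n x C l) \<in> intvecs n"
  by (rule sum_list_in_intvecs) (auto intro: rvec_in_intvecs)

lemma rcos_gvec_sum_rvec:
  "set ls \<subseteq> carrier G \<Longrightarrow> C #> gvec G n x (\<Sum>l\<leftarrow>ls. rvec G n x C l) = C #> foldr (\<otimes>) ls \<one>"
proof (induction ls)
  case Nil
  show ?case by (simp add: gvec_zero[unfolded zero_fun_def])
next
  case (Cons l ls)
  have "C #> gvec G n x (\<Sum>k\<leftarrow>l # ls. rvec G n x C k)
      = (C #> gvec G n x (rvec G n x C l)) <#> (C #> gvec G n x (\<Sum>k\<leftarrow>ls. rvec G n x C k))"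
    by (simp add: rcos_gvec_add)
  also have "\<dots> = (C #> l) <#> (C #> foldr (\<otimes>) ls \<one>)"
    using Cons by (simp add: rcos_gvec_rvec)
  also have "\<dots> = C #> foldr (\<otimes>) (l # ls) \<one>"
    using Cons.prems by (simp add: rcos_sum)
  finally show ?case .
qed

lemma set_link_chain:
  assumes "set ls \<subseteq> \<Lambda>" "\<Lambda> \<subseteq> carrier G"
  shows "set (link_chain G n x C ls) \<subseteq> {link G n x C r lam | r lam. r \<in> intvecs n \<and> lam \<in> \<Lambda>}"
  using assms(1)
proof (induction ls)
  case (Cons l ls)
  have "(\<Sum>k\<leftarrow>ls. rvec G n x C k) \<in> intvecs n" "l \<in> \<Lambda>"
    using Cons.prems assms(2) by (auto intro: sum_rvec_in_intvecs)
  then have "link G n x C (\<Sum>k\<leftarrow>ls. rvec G n x C k) l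
      \<in> {link G n x C r lam | r lam. r \<in> intvecs n \<and> lam \<in> \<Lambda>}"
    by blast
  then show ?case using Cons by simp
qed simp

lemma multlist_link_chain_eq:
  assumes "set ls \<subseteq> carrier G" "foldr (\<otimes>) ls \<one> \<in> C"
  shows "foldr (\<otimes>) (link_chain G n x C ls) \<one> = foldr (\<otimes>) ls \<one>"
proof -
  define r where "r = (\<Sum>l\<leftarrow>ls. rvec G n x C l)"
  have "C #> gvec G n x r = C"
    unfolding r_def rcos_gvec_sum_rvec[OF assms(1)] using assms(2) by (rule rcos_const[OF is_group])
  also have "\<dots> = C #> gvec G n x 0"
    by (simp add: gvec_zero subset)
  finally have "r = 0"
    using sum_rvec_in_intvecs[OF assms(1)] by (intro rcos_gvec_inj) (simp_all add: r_def intvecs_def)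
  moreover have "foldr (\<otimes>) (link_chain G n x C ls) \<one> = inv (gvec G n x r) \<otimes> foldr (\<otimes>) ls \<one>"
    unfolding r_def using x_closed assms(1) by (rule multlist_link_chain)
  ultimately show ?thesis
    using assms(1) by (simp add: gvec_zero)
qed

lemma mem_imp_link_product:
  assumes "\<Lambda> \<subseteq> carrier G" "\<And>l. l \<in> \<Lambda> \<Longrightarrow> inv l \<in> \<Lambda>" "c \<in> generate G \<Lambda>" "c \<in> C"
  shows "\<exists>ls. set ls \<subseteq> {link G n x C r lam | r lam. r \<in> intvecs n \<and> lam \<in> \<Lambda>} \<and> c = foldr (\<otimes>) ls \<one>"
proof -
  obtain ls where ls: "set ls \<subseteq> \<Lambda>" "c = foldr (\<otimes>) ls \<one>"
    using generate_imp_multlist assms(1-3) by blast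
  then have "c = foldr (\<otimes>) (link_chain G n x C ls) \<one>"
    using assms(1,4) by (simp add: multlist_link_chain_eq)
  then show ?thesis using set_link_chain ls(1) assms(1) by blast
qed

end

theorem lemma1:
  fixes G (structure) and n :: nat and x :: "nat \<Rightarrow> 'a" and \<Lambda> :: "'a set"
  assumes grp: "group G"
    and x_carr: "\<And>i. i < n \<Longrightarrow> x i \<in> carrier G"
    and x_gen: "generate G (x ` {..<n}) = carrier G"
    and C_fin: "finite (derived G (carrier G))"
    and free_ab: "bij_betw (\<lambda>r. derived G (carrier G) #> gvec G n x r) (intvecs n)
                    (rcosets (derived G (carrier G)))"
    and Lam_carr: "\<Lambda> \<subseteq> carrier G"
    and Lam_gen: "generate G \<Lambda> = carrier G"
    and Lam_inv: "\<And>l. l \<in> \<Lambda> \<Longrightarrow> inv l \<in> \<Lambda>"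
  shows "\<forall>c \<in> derived G (carrier G). \<exists>ls. set ls \<subseteq>
            {link G n x (derived G (carrier G)) r lam | r lam. r \<in> intvecs n \<and> lam \<in> \<Lambda>}
          \<and> c = foldr (\<otimes>) ls \<one>"
proof -
  interpret group G by (rule grp)
  interpret free_abelian_quotient "derived G (carrier G)" G n x
    by (intro free_abelian_quotient.intro derived_self_is_normal free_abelian_quotient_axioms.intro
        x_carr derived_quot_is_comm_group free_ab)
  have "c \<in> generate G \<Lambda>" if "c \<in> derived G (carrier G)" for c
    using that subset Lam_gen by blast
  then show ?thesis
    using mem_imp_link_product[OF Lam_carr Lam_inv] by blast
qed

end
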